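(* Let $\mathbb{K}\in\{\mathbb{R},\mathbb{C}\}$ and let $\mathcal{X}$ be a topological $\mathbb{K}$-vector space whose topological dual $\mathcal{X}^{\ast}$ separates the points of $\mathcal{X}$. Then $\mathbf{CF}(\mathcal{X}^{\ast})$, endowed with the (subspace topology of the) weak*-Hausdorff hypertopology, is a Hausdorff space.
   Context: Topological vector spaces are Hausdorff. $\mathcal{X}^{\ast}$ carries the weak* topology. $\mathbf{F}(\mathcal{X}^{\ast})$ is the set of nonempty weak*-closed subsets of $\mathcal{X}^{\ast}$ and $\mathbf{CF}(\mathcal{X}^{\ast})\subseteq\mathbf{F}(\mathcal{X}^{\ast})$ the subset of convex ones. The weak*-Hausdorff hypertopology on $\mathbf{F}(\mathcal{X}^{\ast})$ is the topology generated by the family of extended pseudometrics $d_H^{(A)}(F,\tilde F)=\max\{\sup_{\sigma\in F}\inf_{\tilde\sigma\in\tilde F}|(\sigma-\tilde\sigma)(A)|,\ \sup_{\tilde\sigma\in\tilde F}\inf_{\sigma\in F}|(\sigma-\tilde\sigma)(A)|\}\in[0,\infty]$, $A\in\mathcal{X}$. *)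

theory Defs
  imports "HOL-Analysis.Analysis"
begin

text \<open>A topological vector space over the scalar field 'k (a real normed field,
  i.e. R or C up to isomorphism by Mazur's theorem), with scalar multiplication
  sc.\<close>
definition tvs :: "('k::real_normed_field \<Rightarrow> 'v::{ab_group_add,t2_space} \<Rightarrow> 'v) \<Rightarrow> bool" where
  "tvs sc \<longleftrightarrow> vector_space sc
     \<and> continuous_on UNIV (\<lambda>p::'v \<times> 'v. fst p + snd p)
     \<and> continuous_on UNIV (\<lambda>p::'k \<times> 'v. sc (fst p) (snd p))"

definition tdual :: "('k::real_normed_field \<Rightarrow> 'v::{ab_group_add,topological_space} \<Rightarrow> 'v) \<Rightarrow> ('v \<Rightarrow> 'k) set" where
  "tdual sc = {f. Vector_Spaces.linear sc (*) f \<and> continuous_on UNIV f}"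

text \<open>Weak* topology on the dual: topology of pointwise convergence, i.e. the
  subspace topology of the product topology on 'v \<Rightarrow> 'k.\<close>
definition weak_star :: "('k::real_normed_field \<Rightarrow> 'v::{ab_group_add,topological_space} \<Rightarrow> 'v) \<Rightarrow> ('v \<Rightarrow> 'k) topology" where
  "weak_star sc = subtopology (product_topology (\<lambda>_. euclidean) UNIV) (tdual sc)"

definition convex_fun_set :: "('v \<Rightarrow> 'k::real_normed_field) set \<Rightarrow> bool" where
  "convex_fun_set F \<longleftrightarrow> (\<forall>\<sigma>\<in>F. \<forall>\<tau>\<in>F. \<forall>t::real. 0 \<le> t \<and> t \<le> 1 \<longrightarrow>
      (\<lambda>x. of_real t * \<sigma> x + of_real (1 - t) * \<tau> x) \<in> F)"

definition Fstar :: "('k::real_normed_field \<Rightarrow> 'v::{ab_group_add,topological_space} \<Rightarrow> 'v) \<Rightarrow> ('v \<Rightarrow> 'k) set set" where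
  "Fstar sc = {F. F \<noteq> {} \<and> closedin (weak_star sc) F}"

definition CFstar :: "('k::real_normed_field \<Rightarrow> 'v::{ab_group_add,topological_space} \<Rightarrow> 'v) \<Rightarrow> ('v \<Rightarrow> 'k) set set" where
  "CFstar sc = {F \<in> Fstar sc. convex_fun_set F}"

definition dH :: "'v \<Rightarrow> ('v \<Rightarrow> 'k::real_normed_field) set \<Rightarrow> ('v \<Rightarrow> 'k) set \<Rightarrow> ereal" where
  "dH A F G = max (SUP \<sigma>\<in>F. INF \<tau>\<in>G. ereal (norm (\<sigma> A - \<tau> A)))
                  (SUP \<tau>\<in>G. INF \<sigma>\<in>F. ereal (norm (\<sigma> A - \<tau> A)))"

text \<open>Topology on a family FF of sets generated by the family of extended
  pseudometrics dH A, A in 'v: U is open iff around each point F of U some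
  finite intersection of dH-balls of common radius is contained in U.\<close>
definition hyper_topology :: "('v \<Rightarrow> 'k::real_normed_field) set set \<Rightarrow> ('v \<Rightarrow> 'k) set topology" where
  "hyper_topology FF = topology (\<lambda>U. U \<subseteq> FF \<and> (\<forall>F\<in>U. \<exists>S e. finite S \<and> e > 0 \<and>
      {G \<in> FF. \<forall>A\<in>S. dH A F G < ereal e} \<subseteq> U))"

lemma istopology_hyper:
  "istopology (\<lambda>U. U \<subseteq> FF \<and> (\<forall>F\<in>U. \<exists>S e. finite S \<and> e > 0 \<and>
      {G \<in> FF. \<forall>A\<in>S. dH A F G < ereal e} \<subseteq> U))"
  unfolding istopology_def
proof (rule conjI; intro allI impI)
  fix U V
  assume h: "(U \<subseteq> FF \<and> (\<forall>F\<in>U. \<exists>S e. finite S \<and> e > 0 \<and> {G \<in> FF. \<forall>A\<in>S. dH A F G < ereal e} \<subseteq> U))"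
             "(V \<subseteq> FF \<and> (\<forall>F\<in>V. \<exists>S e. finite S \<and> e > 0 \<and> {G \<in> FF. \<forall>A\<in>S. dH A F G < ereal e} \<subseteq> V))"
  show "U \<inter> V \<subseteq> FF \<and> (\<forall>F\<in>U \<inter> V. \<exists>S e. finite S \<and> e > 0 \<and> {G \<in> FF. \<forall>A\<in>S. dH A F G < ereal e} \<subseteq> U \<inter> V)"
  proof (intro conjI ballI)
    show "U \<inter> V \<subseteq> FF" using h by blast
    fix F assume "F \<in> U \<inter> V"
    then have "F \<in> U" "F \<in> V" by auto
    from \<open>F \<in> U\<close> h obtain S1 e1 where a: "finite S1" "e1 > 0" "{G \<in> FF. \<forall>A\<in>S1. dH A F G < ereal e1} \<subseteq> U"
      by blast
    from \<open>F \<in> V\<close> h obtain S2 e2 where b: "finite S2" "e2 > 0" "{G \<in> FF. \<forall>A\<in>S2. dH A F G < ereal e2} \<subseteq> V"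
      by blast
    have "{G \<in> FF. \<forall>A\<in>S1 \<union> S2. dH A F G < ereal (min e1 e2)} \<subseteq> U \<inter> V"
      using a(3) b(3) by (force simp: less_le_trans)
    then show "\<exists>S e. finite S \<and> e > 0 \<and> {G \<in> FF. \<forall>A\<in>S. dH A F G < ereal e} \<subseteq> U \<inter> V"
      using a b by (intro exI[of _ "S1 \<union> S2"] exI[of _ "min e1 e2"]) auto
  qed
next
  fix K
  assume h: "\<forall>U\<in>K. U \<subseteq> FF \<and> (\<forall>F\<in>U. \<exists>S e. finite S \<and> e > 0 \<and> {G \<in> FF. \<forall>A\<in>S. dH A F G < ereal e} \<subseteq> U)"
  show "\<Union>K \<subseteq> FF \<and> (\<forall>F\<in>\<Union>K. \<exists>S e. finite S \<and> e > 0 \<and> {G \<in> FF. \<forall>A\<in>S. dH A F G < ereal e} \<subseteq> \<Union>K)"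
    using h by (meson Union_iff Union_least subset_iff)
qed

end

theory Submission
  imports Defs "HOL-Computational_Algebra.Fundamental_Theorem_Algebra"
begin

text \<open>Let \<open>F \<noteq> G\<close> be weak*-closed convex sets of functionals, say \<open>\<sigma> \<in> F - G\<close>. Since \<open>G\<close> is
  weak*-closed there are finitely many points \<open>A \<in> S\<close> and \<open>\<epsilon> > 0\<close> such that every \<open>\<tau> \<in> G\<close> differs
  from \<open>\<sigma>\<close> by at least \<open>\<epsilon>\<close> at some \<open>A \<in> S\<close>. The vectors \<open>(\<tau> A - \<sigma> A)\<close>, \<open>A \<in> S\<close>, form a
  convex set bounded away from \<open>0\<close> in \<open>K\<^sup>S\<close>; its point of least Euclidean norm, a Hilbert-space
  projection, gives weights \<open>w\<close> with \<open>\<bar>\<Sum>A\<in>S. w A * (\<tau> A - \<sigma> A)\<bar> \<ge> \<delta> > 0\<close>, i.e.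
  \<open>\<bar>\<sigma> B - \<tau> B\<bar> \<ge> \<delta>\<close> on \<open>G\<close> for the single point \<open>B = \<Sum>A\<in>S. sc (w A) A\<close>. Then the
  hypertopology neighbourhoods ``meets the \<open>\<delta>/2\<close>-ball around \<open>\<sigma> B\<close>'' of \<open>F\<close> and ``lies within
  less than \<open>\<delta>/2\<close> of \<open>G\<close> at \<open>B\<close>'' of \<open>G\<close> are disjoint.

  The projection needs the scalar field \<open>K\<close> to be \<open>\<real>\<close> or \<open>\<complex>\<close>, which holds for every real
  normed field by Ostrowski's argument: each element is a root of a real quadratic polynomial.\<close>

section \<open>Real normed fields embed isometrically into \<open>\<complex>\<close>\<close>

lemma map_poly_add_hom:
  fixes f :: "'a::comm_ring_1 \<Rightarrow> 'b::comm_ring_1"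
  assumes "\<And>x y. f (x + y) = f x + f y" "f 0 = 0"
  shows "map_poly f (p + q) = map_poly f p + map_poly f q"
  by (rule poly_eqI) (simp add: coeff_map_poly assms)

lemma map_poly_mult_hom:
  fixes f :: "'a::comm_ring_1 \<Rightarrow> 'b::comm_ring_1"
  assumes add: "\<And>x y. f (x + y) = f x + f y" and mult: "\<And>x y. f (x * y) = f x * f y"
    and zero: "f 0 = 0"
  shows "map_poly f (p * q) = map_poly f p * map_poly f q"
proof (induction p)
  case (pCons a p)
  have "map_poly f (pCons a p * q) = map_poly f (smult a q) + map_poly f (pCons 0 (p * q))"
    by (simp add: map_poly_add_hom add zero)
  also have "\<dots> = smult (f a) (map_poly f q) + pCons 0 (map_poly f p * map_poly f q)"
    by (simp add: map_poly_smult map_poly_pCons mult zero pCons.IH)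
  also have "\<dots> = map_poly f (pCons a p) * map_poly f q"
    by (simp add: map_poly_pCons zero)
  finally show ?case .
qed simp

lemma map_poly_prod_hom:
  fixes f :: "'a::comm_ring_1 \<Rightarrow> 'b::comm_ring_1"
  assumes "\<And>x y. f (x + y) = f x + f y" "\<And>x y. f (x * y) = f x * f y" "f 0 = 0" "f 1 = 1"
  shows "map_poly f (\<Prod>i\<in>A. P i) = (\<Prod>i\<in>A. map_poly f (P i))"
  by (induction A rule: infinite_finite_induct) (simp_all add: map_poly_mult_hom assms)

lemma map_poly_power_hom:
  fixes f :: "'a::comm_ring_1 \<Rightarrow> 'b::comm_ring_1"
  assumes "\<And>x y. f (x + y) = f x + f y" "\<And>x y. f (x * y) = f x * f y" "f 0 = 0" "f 1 = 1"
  shows "map_poly f (p ^ n) = map_poly f p ^ n"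
  by (induction n) (simp_all add: map_poly_mult_hom assms)

definition conj_pair_poly :: "complex \<Rightarrow> 'a::{real_algebra_1,comm_ring_1} poly" where
  "conj_pair_poly z = [:of_real ((cmod z)\<^sup>2), - of_real (2 * Re z), 1:]"

lemma map_poly_of_real_conj_pair_poly [simp]:
  "map_poly of_real (conj_pair_poly z) = conj_pair_poly z"
  by (simp add: conj_pair_poly_def map_poly_pCons)

lemma conj_pair_poly_complex: "conj_pair_poly z = [:-z, 1:] * [:-cnj z, 1:]"
proof -
  have "[:-z, 1:] * [:-cnj z, 1:] = [:z * cnj z, - (z + cnj z), 1:]"
    by (simp add: algebra_simps)
  then show ?thesis
    by (simp add: conj_pair_poly_def complex_mult_cnj complex_add_cnj cmod_power2)
qed

lemma poly_conj_pair_poly: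
  "poly (conj_pair_poly z) x = x\<^sup>2 - of_real (2 * Re z) * x + of_real ((cmod z)\<^sup>2)"
  by (simp add: conj_pair_poly_def algebra_simps power2_eq_square)

lemma monic_real_poly_square_conj_pair_factors:
  fixes G :: "real poly"
  assumes monic: "lead_coeff G = 1"
  obtains r where "G * G = (\<Prod>i<degree G. conj_pair_poly (r i))"
    and "\<And>z. poly (map_poly complex_of_real G) z = 0 \<Longrightarrow> \<exists>i<degree G. r i = z"
proof -
  define Gc where "Gc = map_poly complex_of_real G"
  define N where "N = degree G"
  have degGc: "degree Gc = N" unfolding Gc_def N_def by (rule degree_map_poly) simp
  have "lead_coeff Gc = 1" using monic by (simp add: Gc_def N_def degGc[unfolded Gc_def N_def] coeff_map_poly)
  moreover obtain r where "smult (lead_coeff Gc) (\<Prod>i<degree Gc. [:-r i, 1:]) = Gc"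
    using complex_poly_decompose' by blast
  ultimately have Gc_roots: "Gc = (\<Prod>i<N. [:-r i, 1:])" using degGc by simp
  have "Gc = map_poly cnj Gc"
    unfolding Gc_def by (subst map_poly_map_poly) (auto intro: map_poly_cong)
  also have "\<dots> = (\<Prod>i<N. [:-cnj (r i), 1:])"
    unfolding Gc_roots by (subst map_poly_prod_hom) (simp_all add: map_poly_pCons)
  finally have Gc_cnj_roots: "Gc = (\<Prod>i<N. [:-cnj (r i), 1:])" .
  have "map_poly complex_of_real (G * G) = Gc * Gc"
    by (simp add: Gc_def map_poly_mult_hom)
  also have "\<dots> = (\<Prod>i<N. [:-r i, 1:] * [:-cnj (r i), 1:])"
    by (subst (1) Gc_roots, subst Gc_cnj_roots) (simp only: prod.distrib)
  also have "\<dots> = map_poly complex_of_real (\<Prod>i<N. conj_pair_poly (r i))"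
    by (simp add: conj_pair_poly_complex map_poly_prod_hom)
  finally have "G * G = (\<Prod>i<N. conj_pair_poly (r i))"
    by (simp add: poly_eq_iff coeff_map_poly)
  moreover have "\<exists>i<N. r i = z" if "poly Gc z = 0" for z
    using that by (auto simp: Gc_roots poly_prod)
  ultimately show ?thesis using that unfolding Gc_def N_def by blast
qed

lemma norm_poly_square_ge_conj_pair_bound:
  fixes \<xi> :: "'k::real_normed_field" and G :: "real poly"
  assumes monic: "lead_coeff G = 1" and root: "poly (map_poly complex_of_real G) z = 0"
    and lower: "\<And>w. m \<le> norm (poly (conj_pair_poly w) \<xi>)" and "0 \<le> m"
  shows "norm (poly (conj_pair_poly z) \<xi>) * m ^ (degree G - 1)
          \<le> norm (poly (map_poly of_real G) \<xi>) ^ 2"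
proof -
  define f where "f w = norm (poly (conj_pair_poly w) \<xi>)" for w
  define N where "N = degree G"
  obtain r where GG: "G * G = (\<Prod>i<N. conj_pair_poly (r i))"
    and roots: "\<And>z. poly (map_poly complex_of_real G) z = 0 \<Longrightarrow> \<exists>i<N. r i = z"
    using monic_real_poly_square_conj_pair_factors[OF monic] unfolding N_def by blast
  obtain i0 where i0: "i0 < N" "r i0 = z" using roots[OF root] by blast
  have "norm (poly (map_poly of_real G) \<xi>) ^ 2 = norm (poly (map_poly of_real (G * G)) \<xi>)"
    by (simp add: map_poly_mult_hom norm_mult power2_eq_square)
  also have "\<dots> = (\<Prod>i<N. f (r i))"
    by (simp add: GG map_poly_prod_hom poly_prod prod_norm f_def)
  also have "\<dots> = f z * (\<Prod>i\<in>{..<N} - {i0}. f (r i))"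
    using i0 by (subst prod.remove[of _ i0]) auto
  finally have "norm (poly (map_poly of_real G) \<xi>) ^ 2 = f z * (\<Prod>i\<in>{..<N} - {i0}. f (r i))" .
  moreover have "m ^ (N - 1) \<le> (\<Prod>i\<in>{..<N} - {i0}. f (r i))"
  proof -
    have "m ^ (N - 1) = (\<Prod>i\<in>{..<N} - {i0}. m)" using i0 by simp
    also have "\<dots> \<le> (\<Prod>i\<in>{..<N} - {i0}. f (r i))"
      by (intro prod_mono) (use lower \<open>0 \<le> m\<close> f_def in auto)
    finally show ?thesis .
  qed
  ultimately show ?thesis unfolding f_def N_def by (simp add: mult_left_mono)
qed

lemma conj_pair_power_bound:
  fixes \<xi> :: "'k::real_normed_field"
  assumes lower: "\<And>w. m \<le> norm (poly (conj_pair_poly w) \<xi>)" and "0 \<le> m"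
    and z0: "norm (poly (conj_pair_poly z0) \<xi>) = m"
    and z1: "poly (conj_pair_poly z0) z1 = - complex_of_real \<epsilon>"
    and "0 \<le> \<epsilon>" and "1 \<le> n"
  shows "norm (poly (conj_pair_poly z1) \<xi>) * m ^ (2 * n - 1) \<le> (m ^ n + \<epsilon> ^ n)\<^sup>2"
proof -
  define Q :: "real poly" where "Q = conj_pair_poly z0"
  define G where "G = Q ^ n + [:- ((- \<epsilon>) ^ n):]"
  have "degree Q = 2" "lead_coeff Q = 1" "Q \<noteq> 0" by (simp_all add: Q_def conj_pair_poly_def)
  then have "degree (Q ^ n) = 2 * n" "lead_coeff (Q ^ n) = 1"
    using lead_coeff_power[of Q n] by (simp_all add: degree_power_eq mult.commute)
  then have degG: "degree G = 2 * n" and monic: "lead_coeff G = 1"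
    using \<open>1 \<le> n\<close> by (simp_all add: G_def degree_add_eq_left coeff_pCons split: nat.split)
  have "poly (map_poly complex_of_real G) z1 = 0"
    using z1 unfolding G_def Q_def
    by (simp add: map_poly_add_hom map_poly_power_hom map_poly_pCons)
  from norm_poly_square_ge_conj_pair_bound[OF monic this lower \<open>0 \<le> m\<close>]
  have "norm (poly (conj_pair_poly z1) \<xi>) * m ^ (2 * n - 1) \<le> norm (poly (map_poly of_real G) \<xi>) ^ 2"
    by (simp add: degG)
  also have "\<dots> \<le> (m ^ n + \<epsilon> ^ n)\<^sup>2"
  proof (intro power_mono)
    have "poly (map_poly of_real G) \<xi> = poly (conj_pair_poly z0) \<xi> ^ n - of_real ((- \<epsilon>) ^ n)"
      unfolding G_def Q_def
      by (simp add: map_poly_add_hom map_poly_power_hom map_poly_pCons)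
    also have "norm \<dots> \<le> m ^ n + \<epsilon> ^ n"
      using norm_triangle_ineq4[of "poly (conj_pair_poly z0) \<xi> ^ n" "of_real ((- \<epsilon>) ^ n) :: 'k"]
        z0 \<open>0 \<le> \<epsilon>\<close> by (simp add: norm_power)
    finally show "norm (poly (map_poly of_real G) \<xi>) \<le> m ^ n + \<epsilon> ^ n" .
  qed simp
  finally show ?thesis .
qed

lemma pow_sum_square_lt:
  fixes m a :: real
  assumes "0 < m" "m < a"
  obtains n where "1 \<le> n" "(m ^ n + (m / 2) ^ n)\<^sup>2 < a * m ^ (2 * n - 1)"
proof -
  have "(\<lambda>n. m * (1 + (1 / 2) ^ n)\<^sup>2) \<longlonglongrightarrow> m * (1 + 0)\<^sup>2"
    by (intro tendsto_intros) simp
  then have "\<forall>\<^sub>F n in sequentially. m * (1 + (1 / 2) ^ n)\<^sup>2 < a"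
    using \<open>m < a\<close> by (simp add: order_tendstoD(2))
  moreover have "\<forall>\<^sub>F n in sequentially. 1 \<le> n" by (rule eventually_ge_at_top)
  ultimately obtain n where n: "1 \<le> n" "m * (1 + (1 / 2) ^ n)\<^sup>2 < a"
    using eventually_happens' by (metis (mono_tags, lifting) eventually_conj_iff sequentially_bot)
  have "(m ^ n + (m / 2) ^ n)\<^sup>2 = m ^ (2 * n - 1) * (m * (1 + (1 / 2) ^ n)\<^sup>2)"
  proof -
    have "m ^ (2 * n) = m ^ (2 * n - 1) * m" using n(1) by (simp add: power_eq_if)
    then show ?thesis
      by (simp add: power_divide power_mult_distrib power_mult power2_eq_square algebra_simps)
  qed
  also have "\<dots> < m ^ (2 * n - 1) * a" using n(2) \<open>0 < m\<close> by simp
  finally show ?thesis using that n(1) by (simp add: mult.commute)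
qed

lemma continuous_attains_min_of_max_norm:
  fixes f :: "'a::{real_normed_vector,heine_borel} \<Rightarrow> real"
  assumes cont: "continuous_on UNIV f" and coercive: "\<And>z. R \<le> norm z \<Longrightarrow> f 0 < f z"
  obtains z0 where "\<And>z. f z0 \<le> f z" "\<And>z. f z = f z0 \<Longrightarrow> norm z \<le> norm z0"
proof -
  have "0 < R" using coercive[of 0] by force
  then obtain zm where zm: "zm \<in> cball 0 R" "\<And>z. z \<in> cball 0 R \<Longrightarrow> f zm \<le> f z"
    using continuous_attains_inf[OF compact_cball _ continuous_on_subset[OF cont], of 0 R] by auto
  have min: "f zm \<le> f z" for z
  proof (cases "norm z \<le> R")
    case False
    then show ?thesis using coercive[of z] zm(2)[of 0] \<open>0 < R\<close> by simp
  qed (use zm in simp)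
  define M where "M = {z. f z = f zm}"
  have "M \<subseteq> cball 0 R"
  proof
    fix z assume "z \<in> M"
    then have "\<not> f 0 < f z" using zm(2)[of 0] \<open>0 < R\<close> by (simp add: M_def)
    then show "z \<in> cball 0 R" using coercive[of z] by force
  qed
  moreover have "closed M" unfolding M_def by (rule closed_Collect_eq[OF cont]) simp
  ultimately have "compact M" by (meson bounded_cball bounded_subset compact_eq_bounded_closed)
  moreover have "zm \<in> M" by (simp add: M_def)
  ultimately obtain z0 where "z0 \<in> M" "\<And>z. z \<in> M \<Longrightarrow> norm z \<le> norm z0"
    using continuous_attains_sup[of M norm] by (metis continuous_on_norm_id empty_iff)
  then show ?thesis using min by (intro that[of z0]) (auto simp: M_def)
qed

lemma norm_poly_conj_pair_poly_coercive:
  fixes \<xi> :: "'k::real_normed_field"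
  assumes "3 * norm \<xi> + 1 \<le> cmod z"
  shows "norm (poly (conj_pair_poly 0) \<xi>) < norm (poly (conj_pair_poly z) \<xi>)"
proof -
  define a where "a = norm \<xi>"
  define f where "f = norm (poly (conj_pair_poly z) \<xi>)"
  have "(cmod z)\<^sup>2 = norm (of_real ((cmod z)\<^sup>2) :: 'k)" by (simp add: norm_power)
  also have "\<dots> = norm (poly (conj_pair_poly z) \<xi> - \<xi>\<^sup>2 + of_real (2 * Re z) * \<xi>)"
    by (simp add: poly_conj_pair_poly)
  also have "\<dots> \<le> f + a\<^sup>2 + 2 * cmod z * a"
    using norm_triangle_ineq[of "poly (conj_pair_poly z) \<xi> - \<xi>\<^sup>2" "of_real (2 * Re z) * \<xi>"]
      norm_triangle_ineq4[of "poly (conj_pair_poly z) \<xi>" "\<xi>\<^sup>2"]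
      mult_right_mono[OF abs_Re_le_cmod[of z] norm_ge_zero[of \<xi>]]
    by (simp add: f_def a_def norm_mult norm_power)
  finally have "(cmod z - a)\<^sup>2 - 2 * a\<^sup>2 \<le> f" by (simp add: power2_eq_square algebra_simps)
  moreover have "(2 * a + 1)\<^sup>2 \<le> (cmod z - a)\<^sup>2"
    using assms by (intro power_mono) (simp_all add: a_def)
  moreover have "(2 * a + 1)\<^sup>2 - 2 * a\<^sup>2 = 2 * a\<^sup>2 + 4 * a + 1"
    by (simp add: power2_eq_square algebra_simps)
  moreover have "norm (poly (conj_pair_poly 0) \<xi>) = a\<^sup>2"
    by (simp add: a_def poly_conj_pair_poly norm_power)
  ultimately show ?thesis
    using norm_ge_zero[of \<xi>] zero_le_power2[of a] unfolding f_def a_def by linarith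
qed

text \<open>If the minimum \<open>m\<close> of \<open>\<bar>(\<xi> - z) (\<xi> - cnj z)\<bar>\<close> over \<open>z \<in> \<complex>\<close> were positive, take a
  minimiser \<open>z0\<close> of largest modulus and move it to \<open>z1\<close> with \<open>\<bar>z1\<bar>\<^sup>2 = \<bar>z0\<bar>\<^sup>2 + m/2\<close>, so that the
  value at \<open>z1\<close> exceeds \<open>m\<close>; \<open>conj_pair_power_bound\<close> with large \<open>n\<close> contradicts this.\<close>
lemma real_normed_field_conj_pair_root:
  fixes \<xi> :: "'k::real_normed_field"
  obtains z where "poly (conj_pair_poly z) \<xi> = 0"
proof -
  define f where "f z = norm (poly (conj_pair_poly z) \<xi>)" for z
  have cont: "continuous_on UNIV f"
    unfolding f_def poly_conj_pair_poly by (intro continuous_intros)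
  have coercive: "f 0 < f z" if "3 * norm \<xi> + 1 \<le> norm z" for z
    unfolding f_def using that by (rule norm_poly_conj_pair_poly_coercive)
  obtain z0 where min: "\<And>z. f z0 \<le> f z" and max_norm: "\<And>z. f z = f z0 \<Longrightarrow> cmod z \<le> cmod z0"
    using continuous_attains_min_of_max_norm[OF cont coercive] by blast
  show ?thesis
  proof (cases "f z0 = 0")
    case True
    then show ?thesis using that by (simp add: f_def)
  next
    case False
    define m where "m = f z0"
    have "0 < m" using False by (simp add: m_def f_def)
    define z1 where "z1 = Complex (Re z0) (sqrt ((Im z0)\<^sup>2 + m / 2))"
    have "(cmod z1)\<^sup>2 = (cmod z0)\<^sup>2 + m / 2"
      using \<open>0 < m\<close> by (simp add: z1_def cmod_power2)
    then have "f z1 \<noteq> m"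
      using max_norm[of z1] \<open>0 < m\<close> power_mono[of "cmod z1" "cmod z0" 2] by (force simp: m_def)
    then have "m < f z1" using min[of z1] by (simp add: m_def)
    then obtain n where "1 \<le> n" and lt: "(m ^ n + (m / 2) ^ n)\<^sup>2 < f z1 * m ^ (2 * n - 1)"
      using pow_sum_square_lt \<open>0 < m\<close> by blast
    moreover have "poly (conj_pair_poly z0) z1 = - complex_of_real (m / 2)"
      using \<open>0 < m\<close> cmod_power2[of z0]
      by (simp add: z1_def poly_conj_pair_poly complex_eq_iff power2_eq_square algebra_simps)
    ultimately have "f z1 * m ^ (2 * n - 1) \<le> (m ^ n + (m / 2) ^ n)\<^sup>2"
      using conj_pair_power_bound[of m \<xi> z0 z1 "m / 2" n] min \<open>0 < m\<close>
      unfolding f_def m_def by simp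
    with lt show ?thesis by simp
  qed
qed

lemma real_normed_field_imaginary_unit:
  fixes \<xi> :: "'k::real_normed_field"
  assumes "\<xi> \<notin> \<real>"
  obtains j :: 'k where "j * j = -1" "\<And>x. \<exists>u v. x = of_real u + of_real v * j"
proof -
  have quadratic: "\<exists>a b. (x - of_real a)\<^sup>2 = - of_real (b\<^sup>2)" for x :: 'k
  proof -
    obtain z where "poly (conj_pair_poly z) x = 0" using real_normed_field_conj_pair_root by blast
    then have "(x - of_real (Re z))\<^sup>2 + of_real ((Im z)\<^sup>2) = 0"
      unfolding poly_conj_pair_poly cmod_power2 by (simp add: power2_eq_square algebra_simps)
    then show ?thesis by (metis add_eq_0_iff2)
  qed
  obtain a b where ab: "(\<xi> - of_real a)\<^sup>2 = - of_real (b\<^sup>2)" using quadratic by blast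
  have "b \<noteq> 0"
  proof
    assume "b = 0"
    then have "\<xi> = of_real a" using ab by simp
    then show False using \<open>\<xi> \<notin> \<real>\<close> by simp
  qed
  define j where "j = (\<xi> - of_real a) / of_real b"
  have j2: "j * j = -1"
    using ab \<open>b \<noteq> 0\<close> by (simp add: j_def power2_eq_square[symmetric] power_divide)
  have "\<exists>u v. x = of_real u + of_real v * j" for x :: 'k
  proof -
    obtain c d where cd: "(x - of_real c)\<^sup>2 = - of_real (d\<^sup>2)" using quadratic by blast
    have "(x - of_real c - of_real d * j) * (x - of_real c + of_real d * j)
        = (x - of_real c)\<^sup>2 - of_real (d\<^sup>2) * (j * j)"
      by (simp add: power2_eq_square algebra_simps)
    also have "\<dots> = 0" using cd j2 by simp
    finally consider "x - of_real c - of_real d * j = 0" | "x - of_real c + of_real d * j = 0"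
      by (auto simp only: mult_eq_0_iff)
    then show ?thesis
    proof cases
      case 1
      then show ?thesis by (intro exI[of _ c] exI[of _ d]) (simp add: algebra_simps)
    next
      case 2
      then show ?thesis by (intro exI[of _ c] exI[of _ "- d"]) (simp add: algebra_simps)
    qed
  qed
  with j2 show ?thesis using that by blast
qed

text \<open>On the unit circle \<open>norm (\<phi> u) \<le> 1\<close> because the powers of \<open>\<phi> u\<close> stay bounded, and
  equality holds because \<open>\<phi> (cnj u)\<close> is the inverse of \<open>\<phi> u\<close>.\<close>
lemma norm_eq_cmod_if_multiplicative_bounded:
  fixes \<phi> :: "complex \<Rightarrow> 'k::real_normed_field"
  assumes mult: "\<And>z w. \<phi> (z * w) = \<phi> z * \<phi> w" and real: "\<And>r. \<phi> (of_real r) = of_real r"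
    and bounded: "\<And>z. norm (\<phi> z) \<le> C * cmod z"
  shows "norm (\<phi> z) = cmod z"
proof -
  have pow: "\<phi> (z ^ n) = \<phi> z ^ n" for z n
    by (induction n) (use real[of 1] in \<open>simp_all add: mult\<close>)
  have unit_le: "norm (\<phi> u) \<le> 1" if "cmod u = 1" for u
  proof (rule ccontr)
    assume "\<not> ?thesis"
    then obtain n where "C < norm (\<phi> u) ^ n" using real_arch_pow by fastforce
    moreover have "norm (\<phi> u) ^ n \<le> C" using bounded[of "u ^ n"] that by (simp add: pow norm_power)
    ultimately show False by simp
  qed
  have unit_eq: "norm (\<phi> u) = 1" if "cmod u = 1" for u
  proof -
    have "\<phi> u * \<phi> (cnj u) = 1"
      using that real[of 1] by (simp add: mult[symmetric] complex_mult_cnj cmod_power2[symmetric])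
    then have "norm (\<phi> u) * norm (\<phi> (cnj u)) = 1" by (metis norm_mult norm_one)
    moreover have "norm (\<phi> (cnj u)) \<le> 1" "norm (\<phi> u) \<le> 1" using unit_le that by simp_all
    moreover have "norm (\<phi> u) * norm (\<phi> (cnj u)) \<le> norm (\<phi> u)"
      using mult_left_mono[OF \<open>norm (\<phi> (cnj u)) \<le> 1\<close>, of "norm (\<phi> u)"] by simp
    ultimately show ?thesis by linarith
  qed
  show ?thesis
  proof (cases "z = 0")
    case False
    then have "\<phi> z = of_real (cmod z) * \<phi> (z / of_real (cmod z))"
      by (simp add: mult[symmetric] real[symmetric])
    then show ?thesis using unit_eq[of "z / of_real (cmod z)"] False by (simp add: norm_mult norm_divide)
  qed (use real[of 0] in simp)
qed

definition isometric_algebra_embedding :: "('k::real_normed_field \<Rightarrow> complex) \<Rightarrow> bool" where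
  "isometric_algebra_embedding \<psi> \<longleftrightarrow> Modules.additive \<psi> \<and> (\<forall>x y. \<psi> (x * y) = \<psi> x * \<psi> y)
     \<and> (\<forall>r. \<psi> (of_real r) = of_real r) \<and> (\<forall>x. cmod (\<psi> x) = norm x)"

lemma isometric_algebra_embedding_inv:
  fixes \<phi> :: "complex \<Rightarrow> 'k::real_normed_field"
  assumes "surj \<phi>" and add: "\<And>z w. \<phi> (z + w) = \<phi> z + \<phi> w" and mult: "\<And>z w. \<phi> (z * w) = \<phi> z * \<phi> w"
    and real: "\<And>r. \<phi> (of_real r) = of_real r" and isometry: "\<And>z. norm (\<phi> z) = cmod z"
  shows "isometric_algebra_embedding (inv \<phi>)" "surj (inv \<phi>)"
proof -
  have "inj \<phi>"
  proof (rule injI)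
    fix z w assume "\<phi> z = \<phi> w"
    then have "\<phi> (z - w) = 0" using add[of "z - w" w] by simp
    then show "z = w" using isometry[of "z - w"] by simp
  qed
  then have inv: "inv \<phi> (\<phi> z) = z" "\<phi> (inv \<phi> x) = x" for z x
    using \<open>surj \<phi>\<close> by (simp_all add: surj_f_inv_f)
  have "inv \<phi> (x + y) = inv \<phi> x + inv \<phi> y" "inv \<phi> (x * y) = inv \<phi> x * inv \<phi> y"
    "inv \<phi> (of_real r) = of_real r" "cmod (inv \<phi> x) = norm x" for x y r
    by (metis inv add, metis inv mult, metis inv real, metis inv isometry)
  then show "isometric_algebra_embedding (inv \<phi>)"
    unfolding isometric_algebra_embedding_def Modules.additive_def by blast
  show "surj (inv \<phi>)" using inv(1) by (metis surjI)
qed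

lemma isometric_algebra_embedding_of_imaginary_unit:
  fixes j :: "'k::real_normed_field"
  assumes j2: "j * j = -1" and span: "\<And>x. \<exists>u v. x = of_real u + of_real v * j"
  obtains \<psi> :: "'k \<Rightarrow> complex" where "isometric_algebra_embedding \<psi>" "range \<psi> = UNIV"
proof -
  define \<phi> where "\<phi> z = of_real (Re z) + of_real (Im z) * j" for z
  have add: "\<phi> (z + w) = \<phi> z + \<phi> w" for z w by (simp add: \<phi>_def algebra_simps)
  have mult: "\<phi> (z * w) = \<phi> z * \<phi> w" for z w
  proof -
    have "\<phi> z * \<phi> w = of_real (Re z * Re w) + of_real (Re z * Im w + Im z * Re w) * j
        + of_real (Im z * Im w) * (j * j)"
      by (simp add: \<phi>_def algebra_simps)
    then show ?thesis using j2 by (simp add: \<phi>_def algebra_simps)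
  qed
  have real: "\<phi> (of_real r) = of_real r" for r by (simp add: \<phi>_def)
  have "(norm j)\<^sup>2 = 1"
    using j2 by (metis norm_minus_cancel norm_mult norm_one power2_eq_square)
  then have "norm j = 1" using norm_ge_zero[of j] by (auto simp: power2_eq_1_iff)
  then have bounded: "norm (\<phi> z) \<le> 2 * cmod z" for z
    using norm_triangle_ineq[of "of_real (Re z) :: 'k" "of_real (Im z) * j"]
      abs_Re_le_cmod[of z] abs_Im_le_cmod[of z]
    by (simp add: \<phi>_def norm_mult)
  have isometry: "norm (\<phi> z) = cmod z" for z
    by (rule norm_eq_cmod_if_multiplicative_bounded[OF mult real bounded])
  have "surj \<phi>"
    unfolding surj_def
  proof
    fix x
    obtain u v where "x = of_real u + of_real v * j" using span by blast
    then show "\<exists>z. x = \<phi> z" by (intro exI[of _ "Complex u v"]) (simp add: \<phi>_def)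
  qed
  from isometric_algebra_embedding_inv[OF this add mult real isometry] show ?thesis by (rule that)
qed

lemma real_normed_field_isometric_embedding:
  obtains \<psi> :: "'k::real_normed_field \<Rightarrow> complex"
  where "isometric_algebra_embedding \<psi>" "range \<psi> = UNIV \<or> range \<psi> = \<real>"
proof (cases "\<forall>x::'k. x \<in> \<real>")
  case True
  define re :: "'k \<Rightarrow> real" where "re = inv of_real"
  have of_real_re: "of_real (re x) = x" for x
    using True unfolding re_def by (metis Reals_cases f_inv_into_f rangeI)
  have re_eqI: "re x = r" if "x = of_real r" for x r
    using of_real_re[of x] that by simp
  have "re (x + y) = re x + re y" "re (x * y) = re x * re y" "re (of_real r) = r" for x y r
    by (rule re_eqI; simp add: of_real_re)+
  moreover have "norm x = \<bar>re x\<bar>" for x by (metis norm_of_real of_real_re)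
  ultimately have "isometric_algebra_embedding (\<lambda>x. complex_of_real (re x))"
    by (simp add: isometric_algebra_embedding_def Modules.additive_def)
  moreover have "range (\<lambda>x. complex_of_real (re x)) = \<real>"
    by (auto simp: Reals_def image_iff intro!: exI[of _ "of_real r" for r] re_eqI[symmetric])
  ultimately show ?thesis using that by blast
next
  case False
  then obtain \<xi> :: 'k where "\<xi> \<notin> \<real>" by blast
  then obtain j :: 'k where "j * j = -1" "\<And>x. \<exists>u v. x = of_real u + of_real v * j"
    using real_normed_field_imaginary_unit by blast
  then obtain \<psi> :: "'k \<Rightarrow> complex" where "isometric_algebra_embedding \<psi>" "range \<psi> = UNIV"
    using isometric_algebra_embedding_of_imaginary_unit by blast
  then show ?thesis using that by blast
qed

lemma isometric_algebra_embedding_Re_functional: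
  fixes \<psi> :: "'k::real_normed_field \<Rightarrow> complex"
  assumes emb: "isometric_algebra_embedding \<psi>" and range: "range \<psi> = UNIV \<or> range \<psi> = \<real>"
  obtains w where "\<And>x. Re (\<psi> w * \<psi> x) = Re (cnj v * \<psi> x)"
proof (cases "range \<psi> = UNIV")
  case True
  then obtain w where "\<psi> w = cnj v" by (metis UNIV_I image_iff)
  then show ?thesis by (intro that[of w]) simp
next
  case False
  then have real: "\<psi> x \<in> \<real>" for x using range by blast
  have "\<psi> (of_real (Re v)) = of_real (Re v)" using emb by (simp add: isometric_algebra_embedding_def)
  moreover have "Im (\<psi> x) = 0" for x using real[of x] by (simp add: complex_is_Real_iff)
  ultimately show ?thesis using that[of "of_real (Re v)"] by simp
qed

section \<open>Separation by nearest points in finitely many coordinates\<close>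

lemma convex_fun_setD:
  "convex_fun_set F \<Longrightarrow> \<sigma> \<in> F \<Longrightarrow> \<tau> \<in> F \<Longrightarrow> 0 \<le> t \<Longrightarrow> t \<le> 1
    \<Longrightarrow> (\<lambda>x. of_real t * \<sigma> x + of_real (1 - t) * \<tau> x) \<in> F"
  unfolding convex_fun_set_def by blast

definition sq_norm_on :: "'v set \<Rightarrow> ('v \<Rightarrow> complex) \<Rightarrow> real" where
  "sq_norm_on S z = (\<Sum>A\<in>S. (cmod (z A))\<^sup>2)"

lemma sq_norm_on_nonneg: "0 \<le> sq_norm_on S z"
  unfolding sq_norm_on_def by (intro sum_nonneg) simp

lemma sq_norm_on_parallelogram:
  "sq_norm_on S (\<lambda>A. z A - w A)
     = 2 * sq_norm_on S z + 2 * sq_norm_on S w - 4 * sq_norm_on S (\<lambda>A. (z A + w A) / 2)"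
proof -
  have "(cmod (a - b))\<^sup>2 = 2 * (cmod a)\<^sup>2 + 2 * (cmod b)\<^sup>2 - 4 * (cmod ((a + b) / 2))\<^sup>2" for a b
    unfolding cmod_power2 by (simp add: power2_eq_square field_simps)
  then show ?thesis
    unfolding sq_norm_on_def by (simp add: sum_subtractf sum.distrib sum_distrib_left)
qed

lemma sq_norm_on_add_scaled:
  "sq_norm_on S (\<lambda>A. v A + of_real t * w A)
     = sq_norm_on S v + 2 * t * Re (\<Sum>A\<in>S. cnj (v A) * w A) + t\<^sup>2 * sq_norm_on S w"
proof -
  have "(cmod (a + of_real t * b))\<^sup>2 = (cmod a)\<^sup>2 + 2 * t * Re (cnj a * b) + t\<^sup>2 * (cmod b)\<^sup>2"
    for a b :: complex
    unfolding cmod_power2 by (simp add: power2_eq_square algebra_simps)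
  then show ?thesis
    unfolding sq_norm_on_def by (simp add: Re_sum sum.distrib sum_distrib_left distrib_left)
qed

lemma tendsto_sq_norm_on:
  assumes "finite S" "\<And>A. A \<in> S \<Longrightarrow> ((\<lambda>k. f k A) \<longlongrightarrow> g A) F"
  shows "((\<lambda>k. sq_norm_on S (f k)) \<longlongrightarrow> sq_norm_on S g) F"
  unfolding sq_norm_on_def by (intro tendsto_sum tendsto_intros assms)

lemma nonneg_if_quadratic_nonneg_at_right_0:
  fixes X W :: real
  assumes "\<And>t. 0 < t \<Longrightarrow> t \<le> 1 \<Longrightarrow> 0 \<le> 2 * t * X + t\<^sup>2 * W"
  shows "0 \<le> X"
proof -
  have "((\<lambda>t. 2 * X + t * W) \<longlongrightarrow> 2 * X + 0 * W) (at_right 0)"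
    by (intro tendsto_intros)
  moreover have "\<forall>\<^sub>F t in at_right 0. 0 \<le> 2 * X + t * W"
    unfolding eventually_at_right_field
  proof (intro exI[of _ 1] conjI allI impI)
    fix t :: real assume "0 < t" "t < 1"
    then have "0 \<le> t * (2 * X + t * W)"
      using assms[of t] by (simp add: power2_eq_square algebra_simps)
    then show "0 \<le> 2 * X + t * W" using \<open>0 < t\<close> by (simp add: zero_le_mult_iff)
  qed simp
  ultimately have "0 \<le> 2 * X + 0 * W"
    by (rule tendsto_lowerbound) (simp add: trivial_limit_at_right_real)
  then show ?thesis by simp
qed

lemma convex_fun_set_minimizing_seq_Cauchy:
  fixes C :: "('v \<Rightarrow> complex) set"
  assumes cvx: "convex_fun_set C" and c: "\<And>k. c k \<in> C"
    and lower: "\<And>z. z \<in> C \<Longrightarrow> d \<le> sq_norm_on S z"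
    and minimizing: "\<And>k. sq_norm_on S (c k) < d + 1 / real (Suc k)"
    and "finite S" "A \<in> S"
  shows "Cauchy (\<lambda>k. c k A)"
proof (rule metric_CauchyI)
  have midpoint: "(\<lambda>A. (c k A + c l A) / 2) \<in> C" for k l
  proof -
    have "(\<lambda>A. (c k A + c l A) / 2) = (\<lambda>A. of_real (1 / 2) * c k A + of_real (1 - 1 / 2) * c l A)"
      by (simp add: field_simps)
    then show ?thesis using convex_fun_setD[OF cvx c c, of "1 / 2"] by simp
  qed
  \<comment> \<open>The parallelogram law turns near-minimality of both points and of their midpoint into closeness.\<close>
  have close: "(cmod (c k A - c l A))\<^sup>2 \<le> 2 / real (Suc k) + 2 / real (Suc l)" for k l
  proof -
    have "(cmod (c k A - c l A))\<^sup>2 \<le> sq_norm_on S (\<lambda>A. c k A - c l A)"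
      unfolding sq_norm_on_def using \<open>finite S\<close> \<open>A \<in> S\<close> by (intro member_le_sum) auto
    also have "\<dots> \<le> 2 / real (Suc k) + 2 / real (Suc l)"
      unfolding sq_norm_on_parallelogram
      using minimizing[of k] minimizing[of l] lower[OF midpoint[of k l]] by linarith
    finally show ?thesis .
  qed
  fix e :: real assume "0 < e"
  obtain M :: nat where M: "4 / e\<^sup>2 < real M" using reals_Archimedean2 by blast
  show "\<exists>M. \<forall>m\<ge>M. \<forall>n\<ge>M. dist (c m A) (c n A) < e"
  proof (intro exI allI impI)
    fix m n assume "M \<le> m" "M \<le> n"
    then have "2 / real (Suc m) + 2 / real (Suc n) \<le> 4 / real (Suc M)"
      using frac_le[of 2 2 "real (Suc M)" "real (Suc m)"] frac_le[of 2 2 "real (Suc M)" "real (Suc n)"]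
      by simp
    also have "\<dots> < e\<^sup>2"
      using M \<open>0 < e\<close> by (simp add: field_simps) (smt (verit) zero_less_power)
    finally have "(cmod (c m A - c n A))\<^sup>2 < e\<^sup>2" using close[of m n] by linarith
    then show "dist (c m A) (c n A) < e"
      using \<open>0 < e\<close> by (simp add: dist_norm power_less_imp_less_base)
  qed
qed

text \<open>The minimiser is a coordinatewise limit of a minimising sequence, so \<open>C\<close> need not be closed.\<close>
lemma convex_fun_set_sq_norm_minimizer:
  fixes C :: "('v \<Rightarrow> complex) set"
  assumes "finite S" "C \<noteq> {}" and cvx: "convex_fun_set C"
  obtains q where "sq_norm_on S q = (INF z\<in>C. sq_norm_on S z)"
    and "\<And>z t. z \<in> C \<Longrightarrow> 0 \<le> t \<Longrightarrow> t \<le> 1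
           \<Longrightarrow> sq_norm_on S q \<le> sq_norm_on S (\<lambda>A. of_real t * z A + of_real (1 - t) * q A)"
proof -
  define d where "d = (INF z\<in>C. sq_norm_on S z)"
  have bdd: "bdd_below (sq_norm_on S ` C)" using sq_norm_on_nonneg by (meson bdd_belowI2)
  have lower: "d \<le> sq_norm_on S z" if "z \<in> C" for z
    unfolding d_def using bdd that by (rule cINF_lower)
  have "\<exists>c. c \<in> C \<and> sq_norm_on S c < d + 1 / real (Suc k)" for k
    using cInf_lessD[of "sq_norm_on S ` C" "d + 1 / real (Suc k)"] \<open>C \<noteq> {}\<close>
    unfolding d_def by fastforce
  then obtain c where c: "\<And>k. c k \<in> C" and minimizing: "\<And>k. sq_norm_on S (c k) < d + 1 / real (Suc k)"
    by metis
  define q where "q A = lim (\<lambda>k. c k A)" for A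
  have q: "(\<lambda>k. c k A) \<longlonglongrightarrow> q A" if "A \<in> S" for A
    using convex_fun_set_minimizing_seq_Cauchy[OF cvx c lower minimizing \<open>finite S\<close> that]
    unfolding q_def by (simp add: Cauchy_convergent_iff convergent_LIMSEQ_iff)
  have "(\<lambda>k. sq_norm_on S (c k)) \<longlonglongrightarrow> d"
  proof (rule tendsto_sandwich[of "\<lambda>k. d" _ _ "\<lambda>k. d + 1 / real (Suc k)"])
    show "(\<lambda>k. d + 1 / real (Suc k)) \<longlonglongrightarrow> d"
      using tendsto_add[OF tendsto_const[of d] LIMSEQ_inverse_real_of_nat]
      by (simp add: inverse_eq_divide)
    show "\<forall>\<^sub>F k in sequentially. d \<le> sq_norm_on S (c k)" using lower c by simp
    show "\<forall>\<^sub>F k in sequentially. sq_norm_on S (c k) \<le> d + 1 / real (Suc k)"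
      using minimizing by (simp add: less_imp_le)
  qed simp
  moreover have "(\<lambda>k. sq_norm_on S (c k)) \<longlonglongrightarrow> sq_norm_on S q"
    using \<open>finite S\<close> q by (rule tendsto_sq_norm_on)
  ultimately have "sq_norm_on S q = d" using LIMSEQ_unique by blast
  moreover have "d \<le> sq_norm_on S (\<lambda>A. of_real t * z A + of_real (1 - t) * q A)"
    if "z \<in> C" "0 \<le> t" "t \<le> 1" for z t
  proof (rule LIMSEQ_le_const)
    show "(\<lambda>k. sq_norm_on S (\<lambda>A. of_real t * z A + of_real (1 - t) * c k A))
        \<longlonglongrightarrow> sq_norm_on S (\<lambda>A. of_real t * z A + of_real (1 - t) * q A)"
      using \<open>finite S\<close> by (rule tendsto_sq_norm_on) (intro tendsto_intros q)
    show "\<exists>N. \<forall>k\<ge>N. d \<le> sq_norm_on S (\<lambda>A. of_real t * z A + of_real (1 - t) * c k A)"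
      using that c convex_fun_setD[OF cvx] lower by blast
  qed
  ultimately show ?thesis using that unfolding d_def by simp
qed

lemma convex_fun_set_separation_complex:
  fixes C :: "('v \<Rightarrow> complex) set"
  assumes "finite S" "C \<noteq> {}" "convex_fun_set C" "0 < \<epsilon>"
    and far: "\<And>z. z \<in> C \<Longrightarrow> \<exists>A\<in>S. \<epsilon> \<le> cmod (z A)"
  obtains v \<delta> where "0 < \<delta>" "\<And>z. z \<in> C \<Longrightarrow> \<delta> \<le> Re (\<Sum>A\<in>S. cnj (v A) * z A)"
proof -
  obtain q where q_min: "sq_norm_on S q = (INF z\<in>C. sq_norm_on S z)"
    and q_convex: "\<And>z t. z \<in> C \<Longrightarrow> 0 \<le> t \<Longrightarrow> t \<le> 1
         \<Longrightarrow> sq_norm_on S q \<le> sq_norm_on S (\<lambda>A. of_real t * z A + of_real (1 - t) * q A)"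
    using convex_fun_set_sq_norm_minimizer assms(1-3) by blast
  have "\<epsilon>\<^sup>2 \<le> sq_norm_on S z" if z: "z \<in> C" for z
  proof -
    obtain A where "A \<in> S" "\<epsilon> \<le> cmod (z A)" using far[OF z] by blast
    then have "\<epsilon>\<^sup>2 \<le> (cmod (z A))\<^sup>2" using \<open>0 < \<epsilon>\<close> by (intro power_mono) auto
    also have "\<dots> \<le> sq_norm_on S z"
      unfolding sq_norm_on_def using \<open>finite S\<close> \<open>A \<in> S\<close> by (intro member_le_sum) auto
    finally show ?thesis .
  qed
  then have "\<epsilon>\<^sup>2 \<le> sq_norm_on S q" unfolding q_min using \<open>C \<noteq> {}\<close> by (intro cINF_greatest)
  then have "0 < sq_norm_on S q" using \<open>0 < \<epsilon>\<close> by (smt (verit) zero_less_power)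
  moreover have "sq_norm_on S q \<le> Re (\<Sum>A\<in>S. cnj (q A) * z A)" if "z \<in> C" for z
  proof -
    define X where "X = Re (\<Sum>A\<in>S. cnj (q A) * (z A - q A))"
    have "0 \<le> X"
    proof (rule nonneg_if_quadratic_nonneg_at_right_0)
      fix t :: real assume "0 < t" "t \<le> 1"
      have "(\<lambda>A. of_real t * z A + of_real (1 - t) * q A) = (\<lambda>A. q A + of_real t * (z A - q A))"
        by (simp add: algebra_simps)
      then show "0 \<le> 2 * t * X + t\<^sup>2 * sq_norm_on S (\<lambda>A. z A - q A)"
        using q_convex[OF that, of t] \<open>0 < t\<close> \<open>t \<le> 1\<close>
        by (simp add: sq_norm_on_add_scaled X_def)
    qed
    moreover have "Re (\<Sum>A\<in>S. cnj (q A) * z A) = X + sq_norm_on S q"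
      unfolding X_def sq_norm_on_def cmod_power2
      by (simp add: Re_sum sum.distrib[symmetric] power2_eq_square algebra_simps)
    ultimately show ?thesis by simp
  qed
  ultimately show ?thesis using that by blast
qed

lemma convex_fun_set_image_embedding:
  fixes \<psi> :: "'k::real_normed_field \<Rightarrow> complex"
  assumes "isometric_algebra_embedding \<psi>" and cvx: "convex_fun_set K"
  shows "convex_fun_set ((\<lambda>y A. \<psi> (y A)) ` K)"
  unfolding convex_fun_set_def
proof (intro ballI allI impI)
  have add: "Modules.additive \<psi>" and mult: "\<And>x y. \<psi> (x * y) = \<psi> x * \<psi> y"
    and real: "\<And>r. \<psi> (of_real r) = of_real r"
    using assms(1) by (simp_all add: isometric_algebra_embedding_def)
  fix z1 z2 and t :: real
  assume "z1 \<in> (\<lambda>y A. \<psi> (y A)) ` K" "z2 \<in> (\<lambda>y A. \<psi> (y A)) ` K" and t: "0 \<le> t \<and> t \<le> 1"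
  then obtain y1 y2 where y: "y1 \<in> K" "y2 \<in> K" "z1 = (\<lambda>A. \<psi> (y1 A))" "z2 = (\<lambda>A. \<psi> (y2 A))"
    by blast
  have "(\<lambda>A. of_real t * z1 A + of_real (1 - t) * z2 A)
      = (\<lambda>A. \<psi> (of_real t * y1 A + of_real (1 - t) * y2 A))"
    by (simp only: y additive.add[OF add] mult real)
  moreover have "(\<lambda>A. of_real t * y1 A + of_real (1 - t) * y2 A) \<in> K"
    using convex_fun_setD[OF cvx y(1,2)] t by blast
  ultimately show "(\<lambda>A. of_real t * z1 A + of_real (1 - t) * z2 A) \<in> (\<lambda>y A. \<psi> (y A)) ` K"
    by (rule image_eqI)
qed

lemma convex_fun_set_translate:
  assumes cvx: "convex_fun_set G"
  shows "convex_fun_set ((\<lambda>\<tau> A. \<tau> A - \<sigma> A) ` G)"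
  unfolding convex_fun_set_def
proof (intro ballI allI impI)
  fix y1 y2 and t :: real
  assume "y1 \<in> (\<lambda>\<tau> A. \<tau> A - \<sigma> A) ` G" "y2 \<in> (\<lambda>\<tau> A. \<tau> A - \<sigma> A) ` G"
    and t: "0 \<le> t \<and> t \<le> 1"
  then obtain \<tau>1 \<tau>2 where \<tau>: "\<tau>1 \<in> G" "\<tau>2 \<in> G" "y1 = (\<lambda>A. \<tau>1 A - \<sigma> A)" "y2 = (\<lambda>A. \<tau>2 A - \<sigma> A)"
    by blast
  have "(\<lambda>A. of_real t * y1 A + of_real (1 - t) * y2 A)
      = (\<lambda>A. (of_real t * \<tau>1 A + of_real (1 - t) * \<tau>2 A) - \<sigma> A)"
    by (simp add: \<tau> algebra_simps)
  moreover have "(\<lambda>A. of_real t * \<tau>1 A + of_real (1 - t) * \<tau>2 A) \<in> G"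
    using convex_fun_setD[OF cvx \<tau>(1,2)] t by blast
  ultimately show "(\<lambda>A. of_real t * y1 A + of_real (1 - t) * y2 A) \<in> (\<lambda>\<tau> A. \<tau> A - \<sigma> A) ` G"
    by (rule image_eqI)
qed

lemma convex_fun_set_separation:
  fixes K :: "('v \<Rightarrow> 'k::real_normed_field) set"
  assumes "finite S" "K \<noteq> {}" and cvx: "convex_fun_set K" and "0 < \<epsilon>"
    and far: "\<And>y. y \<in> K \<Longrightarrow> \<exists>A\<in>S. \<epsilon> \<le> norm (y A)"
  obtains w \<delta> where "0 < \<delta>" "\<And>y. y \<in> K \<Longrightarrow> \<delta> \<le> norm (\<Sum>A\<in>S. w A * y A)"
proof -
  obtain \<psi> :: "'k \<Rightarrow> complex"
    where emb: "isometric_algebra_embedding \<psi>" and range: "range \<psi> = UNIV \<or> range \<psi> = \<real>"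
    by (rule real_normed_field_isometric_embedding)
  then have add: "Modules.additive \<psi>" and mult: "\<And>x y. \<psi> (x * y) = \<psi> x * \<psi> y"
    and isometry: "\<And>x. cmod (\<psi> x) = norm x"
    by (simp_all add: isometric_algebra_embedding_def)
  define C where "C = (\<lambda>y A. \<psi> (y A)) ` K"
  have C_convex: "convex_fun_set C"
    unfolding C_def using emb cvx by (rule convex_fun_set_image_embedding)
  have C_ne: "C \<noteq> {}" using \<open>K \<noteq> {}\<close> by (simp add: C_def)
  have C_far: "\<exists>A\<in>S. \<epsilon> \<le> cmod (z A)" if "z \<in> C" for z
    using that far by (auto simp: C_def isometry)
  obtain v \<delta> where "0 < \<delta>" and sep: "\<And>z. z \<in> C \<Longrightarrow> \<delta> \<le> Re (\<Sum>A\<in>S. cnj (v A) * z A)"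
    using convex_fun_set_separation_complex[OF \<open>finite S\<close> C_ne C_convex \<open>0 < \<epsilon>\<close> C_far] by blast
  have "\<forall>A. \<exists>w. \<forall>x. Re (\<psi> w * \<psi> x) = Re (cnj (v A) * \<psi> x)"
  proof
    fix A
    show "\<exists>w. \<forall>x. Re (\<psi> w * \<psi> x) = Re (cnj (v A) * \<psi> x)"
      by (rule isometric_algebra_embedding_Re_functional[OF emb range]) blast
  qed
  then obtain w where w: "\<forall>A x. Re (\<psi> (w A) * \<psi> x) = Re (cnj (v A) * \<psi> x)"
    by (rule choice[THEN exE])
  have "\<delta> \<le> norm (\<Sum>A\<in>S. w A * y A)" if "y \<in> K" for y
  proof -
    have "\<delta> \<le> Re (\<Sum>A\<in>S. cnj (v A) * \<psi> (y A))" using sep that by (simp add: C_def)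
    also have "\<dots> = Re (\<Sum>A\<in>S. \<psi> (w A) * \<psi> (y A))"
      using w by (simp only: Re_sum)
    also have "\<dots> = Re (\<psi> (\<Sum>A\<in>S. w A * y A))"
      by (simp only: additive.sum[OF add] mult)
    also have "\<dots> \<le> norm (\<Sum>A\<in>S. w A * y A)"
      using complex_Re_le_cmod[of "\<psi> (\<Sum>A\<in>S. w A * y A)"] isometry by simp
    finally show ?thesis .
  qed
  then show ?thesis using \<open>0 < \<delta>\<close> that by blast
qed

section \<open>Separation in the weak*-Hausdorff hypertopology\<close>

lemma closedin_product_topology_far_on_finite_coordinates:
  fixes U :: "('a \<Rightarrow> 'b::metric_space) set"
  assumes "closedin (product_topology (\<lambda>_. euclidean) UNIV) U" "\<sigma> \<notin> U"
  obtains S \<epsilon> where "finite S" "0 < \<epsilon>" "\<And>\<tau>. \<tau> \<in> U \<Longrightarrow> \<exists>A\<in>S. \<epsilon> \<le> dist (\<tau> A) (\<sigma> A)"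
proof -
  have "openin (product_topology (\<lambda>_. euclidean) UNIV) (- U)"
    using assms(1) unfolding closedin_def by (simp add: Compl_eq_Diff_UNIV)
  then obtain V where "finite {A. V A \<noteq> UNIV}" and V_open: "\<And>A. open (V A)"
    and "\<sigma> \<in> Pi\<^sub>E UNIV V" and V_sub: "Pi\<^sub>E UNIV V \<subseteq> - U"
    using \<open>\<sigma> \<notin> U\<close> unfolding openin_product_topology_alt by (simp, meson ComplI)
  define S where "S = {A. V A \<noteq> UNIV}"
  have "\<forall>A. \<exists>e>0. ball (\<sigma> A) e \<subseteq> V A"
    using V_open \<open>\<sigma> \<in> Pi\<^sub>E UNIV V\<close> open_contains_ball by blast
  then obtain e where e: "\<And>A. 0 < e A" "\<And>A. ball (\<sigma> A) (e A) \<subseteq> V A" by metis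
  define \<epsilon> where "\<epsilon> = Min (insert 1 (e ` S))"
  have "finite S" by (simp add: S_def \<open>finite {A. V A \<noteq> UNIV}\<close>)
  then have "0 < \<epsilon>" "\<And>A. A \<in> S \<Longrightarrow> \<epsilon> \<le> e A"
    using e(1) by (auto simp: \<epsilon>_def)
  have "\<exists>A\<in>S. \<epsilon> \<le> dist (\<tau> A) (\<sigma> A)" if "\<tau> \<in> U" for \<tau>
  proof (rule ccontr)
    assume "\<not> ?thesis"
    then have "\<tau> A \<in> V A" for A
      using e(2)[of A] \<open>\<And>A. A \<in> S \<Longrightarrow> \<epsilon> \<le> e A\<close>
      by (cases "A \<in> S") (force simp: dist_commute S_def)+
    then show False using V_sub that by (auto simp: PiE_iff)
  qed
  then show ?thesis using \<open>finite S\<close> \<open>0 < \<epsilon>\<close> that by blast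
qed

lemma linear_sum_scale:
  assumes "Vector_Spaces.linear sc (*) \<rho>"
  shows "\<rho> (\<Sum>A\<in>S. sc (w A) A) = (\<Sum>A\<in>S. w A * \<rho> A)"
  using assms unfolding linear_iff_module_hom by (simp add: module_hom.sum module_hom.scale)

lemma CFstar_separation:
  fixes sc :: "'k::real_normed_field \<Rightarrow> 'v::{ab_group_add,t2_space} \<Rightarrow> 'v"
  assumes \<sigma>: "\<sigma> \<in> tdual sc" and G: "G \<in> CFstar sc" and "\<sigma> \<notin> G"
  obtains B \<delta> where "0 < \<delta>" "\<And>\<tau>. \<tau> \<in> G \<Longrightarrow> \<delta> \<le> norm (\<sigma> B - \<tau> B)"
proof -
  have "G \<noteq> {}" and "closedin (weak_star sc) G" and cvx: "convex_fun_set G"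
    using G by (auto simp: CFstar_def Fstar_def)
  then obtain U where U_closed: "closedin (product_topology (\<lambda>_. euclidean) UNIV) U"
    and G_eq: "G = U \<inter> tdual sc"
    unfolding weak_star_def closedin_subtopology by blast
  have "\<sigma> \<notin> U" using G_eq \<sigma> \<open>\<sigma> \<notin> G\<close> by blast
  then obtain S \<epsilon> where "finite S" "0 < \<epsilon>" and far: "\<And>\<tau>. \<tau> \<in> U \<Longrightarrow> \<exists>A\<in>S. \<epsilon> \<le> dist (\<tau> A) (\<sigma> A)"
    using closedin_product_topology_far_on_finite_coordinates[OF U_closed] by blast
  define K where "K = (\<lambda>\<tau> A. \<tau> A - \<sigma> A) ` G"
  have K_convex: "convex_fun_set K"
    unfolding K_def using cvx by (rule convex_fun_set_translate)
  have K_far: "\<exists>A\<in>S. \<epsilon> \<le> norm (y A)" if "y \<in> K" for y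
    using that far G_eq by (auto simp: K_def dist_norm)
  have K_ne: "K \<noteq> {}" using \<open>G \<noteq> {}\<close> by (simp add: K_def)
  obtain w \<delta> where "0 < \<delta>" and sep: "\<And>y. y \<in> K \<Longrightarrow> \<delta> \<le> norm (\<Sum>A\<in>S. w A * y A)"
    using convex_fun_set_separation[OF \<open>finite S\<close> K_ne K_convex \<open>0 < \<epsilon>\<close> K_far] by blast
  define B where "B = (\<Sum>A\<in>S. sc (w A) A)"
  have "\<delta> \<le> norm (\<sigma> B - \<tau> B)" if "\<tau> \<in> G" for \<tau>
  proof -
    have "\<tau> \<in> tdual sc" using that G_eq by blast
    then have "\<tau> B - \<sigma> B = (\<Sum>A\<in>S. w A * (\<tau> A - \<sigma> A))"
      using \<sigma> by (simp add: B_def tdual_def linear_sum_scale sum_subtractf right_diff_distrib)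
    then have "norm (\<sigma> B - \<tau> B) = norm (\<Sum>A\<in>S. w A * (\<tau> A - \<sigma> A))"
      by (metis norm_minus_commute)
    moreover have "(\<lambda>A. \<tau> A - \<sigma> A) \<in> K" using that by (simp add: K_def)
    ultimately show ?thesis using sep by simp
  qed
  then show ?thesis using \<open>0 < \<delta>\<close> that by blast
qed

lemma dH_lessD1:
  assumes "dH A F G < ereal e" "\<sigma> \<in> F"
  shows "\<exists>\<tau>\<in>G. norm (\<sigma> A - \<tau> A) < e"
proof -
  have "(INF \<tau>\<in>G. ereal (norm (\<sigma> A - \<tau> A))) \<le> dH A F G"
    unfolding dH_def using assms(2) by (meson SUP_upper max.coboundedI1)
  then have "(INF \<tau>\<in>G. ereal (norm (\<sigma> A - \<tau> A))) < ereal e" using assms(1) by (rule le_less_trans)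
  then show ?thesis by (simp add: INF_less_iff)
qed

lemma dH_lessD2:
  assumes "dH A F G < ereal e" "\<tau> \<in> G"
  shows "\<exists>\<sigma>\<in>F. norm (\<sigma> A - \<tau> A) < e"
proof -
  have "(INF \<sigma>\<in>F. ereal (norm (\<sigma> A - \<tau> A))) \<le> dH A F G"
    unfolding dH_def using assms(2) by (meson SUP_upper max.coboundedI2)
  then have "(INF \<sigma>\<in>F. ereal (norm (\<sigma> A - \<tau> A))) < ereal e" using assms(1) by (rule le_less_trans)
  then show ?thesis by (simp add: INF_less_iff)
qed

lemma openin_hyper_topology:
  "openin (hyper_topology FF) U \<longleftrightarrow> U \<subseteq> FF \<and> (\<forall>F\<in>U. \<exists>S e. finite S \<and> e > 0 \<and>
      {G \<in> FF. \<forall>A\<in>S. dH A F G < ereal e} \<subseteq> U)"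
  unfolding hyper_topology_def by (simp only: topology_inverse'[OF istopology_hyper])

lemma openin_hyper_topology_CollectI:
  assumes "\<And>H. P H \<Longrightarrow> \<exists>e>0. \<forall>H'. dH B H H' < ereal e \<longrightarrow> P H'"
  shows "openin (hyper_topology FF) {H \<in> FF. P H}"
  unfolding openin_hyper_topology
proof (intro conjI ballI)
  fix H assume "H \<in> {H \<in> FF. P H}"
  then obtain e where "0 < e" "\<And>H'. dH B H H' < ereal e \<Longrightarrow> P H'" using assms by blast
  then show "\<exists>S e. finite S \<and> e > 0 \<and> {G \<in> FF. \<forall>A\<in>S. dH A H G < ereal e} \<subseteq> {H \<in> FF. P H}"
    by (intro exI[of _ "{B}"] exI[of _ e]) auto
qed auto

lemma openin_hyper_topology_meets_ball:
  "openin (hyper_topology FF) {H \<in> FF. \<exists>\<eta>\<in>H. norm (\<eta> B - c) < r}"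
proof (rule openin_hyper_topology_CollectI)
  fix H assume "\<exists>\<eta>\<in>H. norm (\<eta> B - c) < r"
  then obtain \<eta> where \<eta>: "\<eta> \<in> H" "norm (\<eta> B - c) < r" by blast
  show "\<exists>e>0. \<forall>H'. dH B H H' < ereal e \<longrightarrow> (\<exists>\<eta>\<in>H'. norm (\<eta> B - c) < r)"
  proof (intro exI[of _ "r - norm (\<eta> B - c)"] conjI allI impI)
    fix H' assume "dH B H H' < ereal (r - norm (\<eta> B - c))"
    then obtain \<eta>' where "\<eta>' \<in> H'" and close: "norm (\<eta> B - \<eta>' B) < r - norm (\<eta> B - c)"
      using dH_lessD1[OF _ \<eta>(1)] by blast
    have "norm (\<eta>' B - c) \<le> norm (\<eta> B - \<eta>' B) + norm (\<eta> B - c)"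
      using norm_triangle_ineq[of "\<eta>' B - \<eta> B" "\<eta> B - c"] by (simp add: norm_minus_commute)
    then have "norm (\<eta>' B - c) < r" using close by linarith
    then show "\<exists>\<eta>\<in>H'. norm (\<eta> B - c) < r" using \<open>\<eta>' \<in> H'\<close> by blast
  qed (use \<eta> in simp)
qed

lemma openin_hyper_topology_close_to:
  "openin (hyper_topology FF) {H \<in> FF. \<exists>s<r. \<forall>\<eta>\<in>H. \<exists>\<tau>\<in>G. norm (\<eta> B - \<tau> B) < s}"
proof (rule openin_hyper_topology_CollectI)
  fix H assume "\<exists>s<r. \<forall>\<eta>\<in>H. \<exists>\<tau>\<in>G. norm (\<eta> B - \<tau> B) < s"
  then obtain s where s: "s < r" "\<And>\<eta>. \<eta> \<in> H \<Longrightarrow> \<exists>\<tau>\<in>G. norm (\<eta> B - \<tau> B) < s" by blast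
  show "\<exists>e>0. \<forall>H'. dH B H H' < ereal e \<longrightarrow> (\<exists>s<r. \<forall>\<eta>\<in>H'. \<exists>\<tau>\<in>G. norm (\<eta> B - \<tau> B) < s)"
  proof (rule exI[of _ "(r - s) / 2"], intro conjI allI impI)
    fix H' assume H': "dH B H H' < ereal ((r - s) / 2)"
    have "\<exists>\<tau>\<in>G. norm (\<eta>' B - \<tau> B) < s + (r - s) / 2" if \<eta>': "\<eta>' \<in> H'" for \<eta>'
    proof -
      obtain \<eta> where "\<eta> \<in> H" and close: "norm (\<eta> B - \<eta>' B) < (r - s) / 2"
        using dH_lessD2[OF H' \<eta>'] by blast
      then obtain \<tau> where "\<tau> \<in> G" and near: "norm (\<eta> B - \<tau> B) < s" using s(2) by blast
      have "norm (\<eta>' B - \<tau> B) \<le> norm (\<eta> B - \<eta>' B) + norm (\<eta> B - \<tau> B)"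
        using norm_triangle_ineq[of "\<eta>' B - \<eta> B" "\<eta> B - \<tau> B"] by (simp add: norm_minus_commute)
      then have "norm (\<eta>' B - \<tau> B) < s + (r - s) / 2" using close near by linarith
      then show ?thesis using \<open>\<tau> \<in> G\<close> by blast
    qed
    moreover have "s + (r - s) / 2 < r" using s(1) by (simp add: field_simps)
    ultimately show "\<exists>s<r. \<forall>\<eta>\<in>H'. \<exists>\<tau>\<in>G. norm (\<eta> B - \<tau> B) < s" by blast
  qed (use s in simp)
qed

lemma hyper_topology_separation:
  assumes "F \<in> FF" "G \<in> FF" "\<sigma> \<in> F" "0 < \<delta>" and far: "\<And>\<tau>. \<tau> \<in> G \<Longrightarrow> \<delta> \<le> norm (\<sigma> B - \<tau> B)"
  shows "\<exists>U V. openin (hyper_topology FF) U \<and> openin (hyper_topology FF) V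
           \<and> F \<in> U \<and> G \<in> V \<and> disjnt U V"
proof (intro exI conjI)
  let ?U = "{H \<in> FF. \<exists>\<eta>\<in>H. norm (\<eta> B - \<sigma> B) < \<delta> / 2}"
  let ?V = "{H \<in> FF. \<exists>s<\<delta> / 2. \<forall>\<eta>\<in>H. \<exists>\<tau>\<in>G. norm (\<eta> B - \<tau> B) < s}"
  show "openin (hyper_topology FF) ?U" by (rule openin_hyper_topology_meets_ball)
  show "openin (hyper_topology FF) ?V" by (rule openin_hyper_topology_close_to)
  have "norm (\<sigma> B - \<sigma> B) < \<delta> / 2" using \<open>0 < \<delta>\<close> by simp
  then show "F \<in> ?U" using \<open>F \<in> FF\<close> \<open>\<sigma> \<in> F\<close> by blast
  have "\<forall>\<eta>\<in>G. \<exists>\<tau>\<in>G. norm (\<eta> B - \<tau> B) < \<delta> / 4" using \<open>0 < \<delta>\<close> by force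
  moreover have "\<delta> / 4 < \<delta> / 2" using \<open>0 < \<delta>\<close> by simp
  ultimately show "G \<in> ?V" using \<open>G \<in> FF\<close> by blast
  show "disjnt ?U ?V"
    unfolding disjnt_def
  proof (rule equals0I)
    fix H assume "H \<in> ?U \<inter> ?V"
    then obtain \<eta> s where \<eta>: "\<eta> \<in> H" "norm (\<eta> B - \<sigma> B) < \<delta> / 2"
      and s: "s < \<delta> / 2" "\<forall>\<eta>\<in>H. \<exists>\<tau>\<in>G. norm (\<eta> B - \<tau> B) < s" by blast
    then obtain \<tau> where "\<tau> \<in> G" "norm (\<eta> B - \<tau> B) < s" by blast
    moreover have "norm (\<sigma> B - \<tau> B) \<le> norm (\<eta> B - \<sigma> B) + norm (\<eta> B - \<tau> B)"
      using norm_triangle_ineq[of "\<sigma> B - \<eta> B" "\<eta> B - \<tau> B"] by (simp add: norm_minus_commute)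
    ultimately show False using far[of \<tau>] \<eta> s by linarith
  qed
qed

lemma Hausdorff_space_subtopologyI:
  assumes "\<And>x y. x \<in> topspace X \<inter> S \<Longrightarrow> y \<in> topspace X \<inter> S \<Longrightarrow> x \<noteq> y
             \<Longrightarrow> \<exists>U V. openin X U \<and> openin X V \<and> x \<in> U \<and> y \<in> V \<and> disjnt U V"
  shows "Hausdorff_space (subtopology X S)"
  unfolding Hausdorff_space_def
proof (intro allI impI, elim conjE)
  fix x y assume "x \<in> topspace (subtopology X S)" "y \<in> topspace (subtopology X S)" "x \<noteq> y"
  then have "x \<in> topspace X \<inter> S" "y \<in> topspace X \<inter> S" by auto
  then obtain U V where "openin X U" "openin X V" "x \<in> U" "y \<in> V" "disjnt U V"
    using assms \<open>x \<noteq> y\<close> by blast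
  then show "\<exists>U V. openin (subtopology X S) U \<and> openin (subtopology X S) V \<and> x \<in> U \<and> y \<in> V \<and> disjnt U V"
    using \<open>x \<in> topspace (subtopology X S)\<close> \<open>y \<in> topspace (subtopology X S)\<close>
    by (intro exI[of _ "U \<inter> S"] exI[of _ "V \<inter> S"]) (auto simp: openin_subtopology_Int disjnt_def)
qed

lemma Fstar_hyper_topology_separation:
  fixes sc :: "'k::real_normed_field \<Rightarrow> 'v::{ab_group_add,t2_space} \<Rightarrow> 'v"
  assumes F: "F \<in> Fstar sc" and G: "G \<in> CFstar sc" and "\<sigma> \<in> F" "\<sigma> \<notin> G"
  shows "\<exists>U V. openin (hyper_topology (Fstar sc)) U \<and> openin (hyper_topology (Fstar sc)) V
           \<and> F \<in> U \<and> G \<in> V \<and> disjnt U V"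
proof -
  have "F \<subseteq> tdual sc"
    using F closedin_subset by (fastforce simp: Fstar_def weak_star_def)
  then obtain B \<delta> where "0 < \<delta>" "\<And>\<tau>. \<tau> \<in> G \<Longrightarrow> \<delta> \<le> norm (\<sigma> B - \<tau> B)"
    using CFstar_separation[OF _ G \<open>\<sigma> \<notin> G\<close>] \<open>\<sigma> \<in> F\<close> by blast
  moreover have "G \<in> Fstar sc" using G by (simp add: CFstar_def)
  ultimately show ?thesis using F \<open>\<sigma> \<in> F\<close> by (intro hyper_topology_separation)
qed

theorem corollary3p11:
  fixes sc :: "'k::real_normed_field \<Rightarrow> 'v::{ab_group_add,t2_space} \<Rightarrow> 'v"
  assumes "tvs sc"
    and "\<forall>x y. x \<noteq> y \<longrightarrow> (\<exists>f\<in>tdual sc. f x \<noteq> f y)"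
  shows "Hausdorff_space (subtopology (hyper_topology (Fstar sc)) (CFstar sc))"
proof (rule Hausdorff_space_subtopologyI)
  fix F G
  assume "F \<in> topspace (hyper_topology (Fstar sc)) \<inter> CFstar sc"
    "G \<in> topspace (hyper_topology (Fstar sc)) \<inter> CFstar sc" "F \<noteq> G"
  then have F: "F \<in> CFstar sc" and G: "G \<in> CFstar sc" by blast+
  then have "F \<in> Fstar sc" "G \<in> Fstar sc" by (simp_all add: CFstar_def)
  from \<open>F \<noteq> G\<close> consider \<sigma> where "\<sigma> \<in> F" "\<sigma> \<notin> G" | \<sigma> where "\<sigma> \<in> G" "\<sigma> \<notin> F" by blast
  then show "\<exists>U V. openin (hyper_topology (Fstar sc)) U \<and> openin (hyper_topology (Fstar sc)) V
      \<and> F \<in> U \<and> G \<in> V \<and> disjnt U V"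
  proof cases
    case 1
    then show ?thesis using Fstar_hyper_topology_separation[OF \<open>F \<in> Fstar sc\<close> G] by blast
  next
    case 2
    then obtain V U where "openin (hyper_topology (Fstar sc)) V" "openin (hyper_topology (Fstar sc)) U"
      "G \<in> V" "F \<in> U" "disjnt V U"
      using Fstar_hyper_topology_separation[OF \<open>G \<in> Fstar sc\<close> F] by blast
    then show ?thesis using disjnt_sym by blast
  qed
qed

end
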